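(* Let $n\ge 6$, $1\le k\le n-1$, let $I,J$ be tightly $r$-interlacing $k$-subsets of $\{1,\dots,n\}$ with $I\setminus J=\{i_1,\dots,i_r\}$, $J\setminus I=\{j_1,\dots,j_r\}$, $1\le i_1<j_1<i_2<j_2<\dots<i_r<j_r\le n$, let $b_1,\dots,b_{2r}\in\mathbb{C}[[t]]$ with $\sum_{l=1}^{2r}b_l=0$, and put $S_m=\sum_{g=1}^m b_g$. If $\varphi=(\varphi_i)_{i=1}^n$ is an endomorphism of $\mathbb{M}(I,J)$, then there are $a,b,c,d\in\mathbb{C}[[t]]$ such that $t\mid c$, and $t\mid (d-a)S_{2m}-S_{2m}^2\,t^{-1}c$ for every $m=1,\dots,r-1$, and $\varphi_{j_r}=\begin{pmatrix}a&b\\c&d\end{pmatrix}$, $\varphi_{i_l}=\begin{pmatrix}a+S_{2l-1}t^{-1}c & tb+(d-a)S_{2l-1}-S_{2l-1}^2t^{-1}c\\ t^{-1}c & d-S_{2l-1}t^{-1}c\end{pmatrix}$, $\varphi_{j_l}=\begin{pmatrix}a+S_{2l}t^{-1}c & b+t^{-1}\big((d-a)S_{2l}-S_{2l}^2t^{-1}c\big)\\ c & d-S_{2l}t^{-1}c\end{pmatrix}$ for $l=1,\dots,r$, and $\varphi_i=\varphi_{i-1}$ for every $i\in (I\cap J)\cup(I^c\cap J^c)$ (indices of vertices taken modulo $n$, vertex $0$ = vertex $n$).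
   Context: $\Gamma_n$ is the quiver with vertices $1,\dots,n$ on a cycle (vertex $0$ identified with $n$), arrows $x_i\colon i-1\to i$, $y_i\colon i\to i-1$. $B_{k,n}$ is its completed path algebra modulo the closure of the ideal generated by $xy=yx$ and $x^k=y^{n-k}$ at every vertex; its centre is $\mathbb{C}[[t]]$, $t=\sum_i x_iy_i$. $I,J$ are tightly $r$-interlacing if there are $\{i_1,i_3,\dots,i_{2r-1}\}\subset I\setminus J$, $\{i_2,\dots,i_{2r}\}\subset J\setminus I$ with $i_1<i_2<\dots<i_{2r}<i_1$ cyclically, no larger such subsets exist, and $|I\cap J|=k-r$. The module $\mathbb{M}(I,J)$ has $V_i=\mathbb{C}[[t]]^2$ at each vertex, with $x_{i_l}=\begin{pmatrix}t&b_{2l-1}\\0&1\end{pmatrix}$, $y_{i_l}=\begin{pmatrix}1&-b_{2l-1}\\0&t\end{pmatrix}$, $x_{j_l}=\begin{pmatrix}1&b_{2l}\\0&t\end{pmatrix}$, $y_{j_l}=\begin{pmatrix}t&-b_{2l}\\0&1\end{pmatrix}$ ($l=1,\dots,r$), $x_i=tE$, $y_i=E$ for $i\notin I\cup J$, and $x_i=E$, $y_i=tE$ for $i\in I\cap J$ ($E$ the $2\times 2$ identity). An endomorphism is a tuple of $2\times2$ matrices $\varphi_i$ over $\mathbb{C}[[t]]$ with $x_i\varphi_{i-1}=\varphi_ix_i$ and $y_i\varphi_i=\varphi_{i-1}y_i$ for all $i$. Notation: if $t^dv=w$ for a positive integer $d$, then $t^{-d}w$ denotes $v$. *)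

theory Defs
  imports "HOL-Analysis.Finite_Cartesian_Product"
          "HOL-Computational_Algebra.Formal_Power_Series"
begin

text \<open>The ring C[[t]] is \<open>complex fps\<close>, with t = \<open>fps_X\<close>.
  2x2 matrices over it are elements of \<open>complex fps ^ 2 ^ 2\<close>; the matrix
  product is \<open>**\<close>.\<close>

type_synonym mat2 = "complex fps ^ 2 ^ 2"

definition mat2 :: "'a \<Rightarrow> 'a \<Rightarrow> 'a \<Rightarrow> 'a \<Rightarrow> 'a ^ 2 ^ 2" where
  "mat2 a b c d = (\<chi> i j. if i = 1 then (if j = 1 then a else b)
                                   else (if j = 1 then c else d))"

text \<open>Notation of the paper: if t^d v = w then t^{-d} w denotes v (here d = 1).\<close>
definition tinv :: "complex fps \<Rightarrow> complex fps" where
  "tinv w = (THE v. fps_X * v = w)"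

definition prev :: "nat \<Rightarrow> nat \<Rightarrow> nat" where
  "prev n i = (if i = 1 then n else i - 1)"

text \<open>A sequence s 1, ..., s m is cyclically strictly increasing
  (s 1 < s 2 < ... < s m < s 1 cyclically): some rotation of it is strictly increasing.\<close>
definition cyc_increasing :: "(nat \<Rightarrow> nat) \<Rightarrow> nat \<Rightarrow> bool" where
  "cyc_increasing s m \<longleftrightarrow>
     (\<exists>p<m. \<forall>u v. u < v \<and> v < m \<longrightarrow>
        s ((u + p) mod m + 1) < s ((v + p) mod m + 1))"

definition interlacing_of_size :: "nat set \<Rightarrow> nat set \<Rightarrow> nat \<Rightarrow> bool" where
  "interlacing_of_size I J r \<longleftrightarrow>
     (\<exists>s. cyc_increasing s (2 * r) \<and>
          (\<forall>l\<in>{1..r}. s (2 * l - 1) \<in> I - J \<and> s (2 * l) \<in> J - I))"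

definition tightly_interlacing :: "nat \<Rightarrow> nat \<Rightarrow> nat set \<Rightarrow> nat set \<Rightarrow> bool" where
  "tightly_interlacing k r I J \<longleftrightarrow>
     interlacing_of_size I J r \<and> (\<forall>r'>r. \<not> interlacing_of_size I J r') \<and>
     card (I \<inter> J) = k - r"

text \<open>The arrows of the module M(I,J). The labelling of I - J and J - I is given by
  the sequences ii, jj (ii l = i_l, jj l = j_l for l = 1..r); b l = b_l.
  Vertex v in {1..n}; x_v : V_{v-1} \<rightarrow> V_v, y_v : V_v \<rightarrow> V_{v-1}.\<close>
definition Mx :: "nat set \<Rightarrow> nat set \<Rightarrow> nat \<Rightarrow> (nat \<Rightarrow> nat) \<Rightarrow> (nat \<Rightarrow> nat)
                   \<Rightarrow> (nat \<Rightarrow> complex fps) \<Rightarrow> nat \<Rightarrow> mat2" where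
  "Mx I J r ii jj b v =
     (if \<exists>l\<in>{1..r}. v = ii l then
        (let l = THE l. l \<in> {1..r} \<and> v = ii l in mat2 fps_X (b (2 * l - 1)) 0 1)
      else if \<exists>l\<in>{1..r}. v = jj l then
        (let l = THE l. l \<in> {1..r} \<and> v = jj l in mat2 1 (b (2 * l)) 0 fps_X)
      else if v \<in> I \<inter> J then mat2 1 0 0 1
      else mat2 fps_X 0 0 fps_X)"

definition My :: "nat set \<Rightarrow> nat set \<Rightarrow> nat \<Rightarrow> (nat \<Rightarrow> nat) \<Rightarrow> (nat \<Rightarrow> nat)
                   \<Rightarrow> (nat \<Rightarrow> complex fps) \<Rightarrow> nat \<Rightarrow> mat2" where
  "My I J r ii jj b v =
     (if \<exists>l\<in>{1..r}. v = ii l then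
        (let l = THE l. l \<in> {1..r} \<and> v = ii l in mat2 1 (- b (2 * l - 1)) 0 fps_X)
      else if \<exists>l\<in>{1..r}. v = jj l then
        (let l = THE l. l \<in> {1..r} \<and> v = jj l in mat2 fps_X (- b (2 * l)) 0 1)
      else if v \<in> I \<inter> J then mat2 fps_X 0 0 fps_X
      else mat2 1 0 0 1)"

definition is_endo :: "nat \<Rightarrow> nat set \<Rightarrow> nat set \<Rightarrow> nat \<Rightarrow> (nat \<Rightarrow> nat) \<Rightarrow> (nat \<Rightarrow> nat)
                        \<Rightarrow> (nat \<Rightarrow> complex fps) \<Rightarrow> (nat \<Rightarrow> mat2) \<Rightarrow> bool" where
  "is_endo n I J r ii jj b \<phi> \<longleftrightarrow>
     (\<forall>v\<in>{1..n}. Mx I J r ii jj b v ** \<phi> (prev n v) = \<phi> v ** Mx I J r ii jj b v \<and>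
                My I J r ii jj b v ** \<phi> v = \<phi> (prev n v) ** My I J r ii jj b v)"

end

theory Submission imports Defs "HOL-Analysis.Cartesian_Space"
begin

(* At a vertex outside I - J and J - I
   the arrow x_v is scalar, so \<phi> is constant along every gap between consecutive marked
   vertices i_1 < j_1 < ... < i_r < j_r, including the gap through n and 1. Starting from
   \<phi>_{j_r} = (a b; c d), commuting with x_{i_1} = (t b_1; 0 1) forces t | c; passing the arrows
   x_{i_l} = (t b_{2l-1}; 0 1) and x_{j_l} = (1 b_{2l}; 0 t) in turn then determines each
   \<phi>_{i_l}, \<phi>_{j_l} from its predecessor, the partial sums S_m accumulating the b's. Over
   the fraction field, \<phi>_{j_l} is just the conjugate of \<phi>_{j_r} by (1 S_{2l}/t; 0 1), and
   the divisibility conditions say that this conjugate has entries in C[[t]]. Neither n >= 6, the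
   cardinalities, tightness nor the vanishing of b_1 + ... + b_{2r} is needed. *)

lemma mat2_nth [simp]:
  "mat2 a b c d $ 1 $ 1 = a" "mat2 a b c d $ 1 $ 2 = b"
  "mat2 a b c d $ 2 $ 1 = c" "mat2 a b c d $ 2 $ 2 = d"
  by (simp_all add: mat2_def)

lemma mat2_mult:
  fixes a :: "'a::semiring_1"
  shows "mat2 a b c d ** mat2 e f g h = mat2 (a*e + b*g) (a*f + b*h) (c*e + d*g) (c*f + d*h)"
  by (simp add: matrix_matrix_mult_def mat2_def vec_eq_iff sum_2 forall_2)

lemma mat2_eq_iff: "mat2 a b c d = mat2 a' b' c' d' \<longleftrightarrow> a = a' \<and> b = b' \<and> c = c' \<and> d = d'"
  by (auto simp: mat2_def vec_eq_iff forall_2)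

lemma mat2_cases:
  obtains a b c d where "M = mat2 a b c d"
proof
  show "M = mat2 (M$1$1) (M$1$2) (M$2$1) (M$2$2)"
    by (auto simp: mat2_def vec_eq_iff forall_2)
qed

lemma tinv_fps_X_mult [simp]: "tinv (fps_X * v) = v"
  unfolding tinv_def by (rule the_equality) auto

lemma steps_eq_imp_eq:
  fixes f :: "nat \<Rightarrow> 'a"
  assumes "p \<le> q" and "\<And>w. p < w \<Longrightarrow> w \<le> q \<Longrightarrow> f w = f (w - 1)"
  shows "f q = f p"
  using assms(1)
proof (induction q rule: dec_induct)
  case (step m)
  then show ?case using assms(2)[of "Suc m"] by simp
qed simp

lemma intertwine_scalar:
  fixes X :: "'a::idom"
  assumes "X \<noteq> 0" and "mat2 X 0 0 X ** P = Q ** mat2 X 0 0 X"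
  shows "Q = P"
proof -
  obtain p q u w where P: "P = mat2 p q u w" by (rule mat2_cases)
  obtain p' q' u' w' where Q: "Q = mat2 p' q' u' w'" by (rule mat2_cases)
  show ?thesis using assms unfolding P Q by (simp add: mat2_mult mat2_eq_iff mult.commute)
qed

lemma intertwine_upper_X1_lower_left:
  fixes X :: "'a::semiring_1"
  assumes "mat2 X \<beta> 0 1 ** P = Q ** mat2 X \<beta> 0 1"
  shows "P $ 2 $ 1 = Q $ 2 $ 1 * X"
proof -
  obtain p q u w where P: "P = mat2 p q u w" by (rule mat2_cases)
  obtain p' q' u' w' where Q: "Q = mat2 p' q' u' w'" by (rule mat2_cases)
  show ?thesis using assms unfolding P Q by (simp add: mat2_mult mat2_eq_iff)
qed

lemma intertwine_upper_X1:
  fixes X :: "'a::idom"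
  assumes X: "X \<noteq> 0" and e: "X * e = (d - a) * s - s\<^sup>2 * c"
    and eq: "mat2 X \<beta> 0 1 ** mat2 (a + s*c) (bb + e) (X*c) (d - s*c) = Q ** mat2 X \<beta> 0 1"
  shows "Q = mat2 (a + (s + \<beta>)*c) (X*bb + (d - a)*(s + \<beta>) - (s + \<beta>)\<^sup>2*c) c (d - (s + \<beta>)*c)"
proof -
  obtain p q u w where Q: "Q = mat2 p q u w" by (rule mat2_cases)
  have h: "X * (a + s*c) + \<beta> * (X*c) = p * X" "X * (bb + e) + \<beta> * (d - s*c) = p * \<beta> + q"
    "X * c = u * X" "d - s*c = u * \<beta> + w"
    using eq unfolding Q mat2_mult mat2_eq_iff
      mult_zero_left mult_zero_right add_0_left add_0_right mult_1_left mult_1_right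
    by blast+
  have u: "u = c" using h(3) X by (simp add: mult.commute)
  have p: "p = a + (s + \<beta>)*c"
  proof -
    have "X * p = X * (a + (s + \<beta>)*c)" using h(1) by (simp add: algebra_simps)
    then show ?thesis using X by simp
  qed
  have "q = X*bb + X*e + \<beta> * (d - s*c) - p * \<beta>" using h(2) by (simp add: algebra_simps)
  then have q: "q = X*bb + (d - a)*(s + \<beta>) - (s + \<beta>)\<^sup>2*c"
    unfolding e p by (simp add: algebra_simps power2_eq_square)
  have w: "w = d - (s + \<beta>)*c" using h(4) u by (simp add: algebra_simps)
  show ?thesis using Q p q u w by simp
qed

lemma intertwine_upper_1X:
  fixes X :: "'a::idom"
  assumes X: "X \<noteq> 0"
    and eq: "mat2 1 \<beta> 0 X ** mat2 (a + s*c) (X*bb + (d - a) * s - s\<^sup>2*c) c (d - s*c)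
             = Q ** mat2 1 \<beta> 0 X"
  shows "\<exists>e. X * e = (d - a)*(s + \<beta>) - (s + \<beta>)\<^sup>2*c \<and>
             Q = mat2 (a + (s + \<beta>)*c) (bb + e) (X*c) (d - (s + \<beta>)*c)"
proof -
  obtain p q u w where Q: "Q = mat2 p q u w" by (rule mat2_cases)
  have h: "a + s*c + \<beta>*c = p" "X*bb + (d - a) * s - s\<^sup>2*c + \<beta> * (d - s*c) = p * \<beta> + q * X"
    "X * c = u" "X * (d - s*c) = u * \<beta> + w * X"
    using eq unfolding Q mat2_mult mat2_eq_iff
      mult_zero_left mult_zero_right add_0_left add_0_right mult_1_left mult_1_right
    by blast+
  have w: "w = d - (s + \<beta>)*c"
  proof -
    have "X * w = X * (d - (s + \<beta>)*c)" using h(3,4) by (simp add: algebra_simps)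
    then show ?thesis using X by simp
  qed
  have "X * (q - bb) = (d - a)*(s + \<beta>) - (s + \<beta>)\<^sup>2*c"
    using h(2) unfolding h(1)[symmetric] by (simp add: algebra_simps power2_eq_square)
  moreover have "Q = mat2 (a + (s + \<beta>)*c) (bb + (q - bb)) (X*c) (d - (s + \<beta>)*c)"
    using Q h(1,3) w by (simp add: algebra_simps)
  ultimately show ?thesis by blast
qed

locale module_endo =
  fixes n r :: nat and I J :: "nat set" and ii jj :: "nat \<Rightarrow> nat"
    and b :: "nat \<Rightarrow> complex fps" and \<phi> :: "nat \<Rightarrow> mat2"
  assumes IJ: "I \<subseteq> {1..n}" "J \<subseteq> {1..n}"
    and r_pos: "r \<ge> 1"
    and IJ_diff: "I - J = ii ` {1..r}" "J - I = jj ` {1..r}"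
    and ii_less_jj: "\<And>l. l \<in> {1..r} \<Longrightarrow> ii l < jj l"
    and jj_less_ii_Suc: "\<And>l. l \<in> {1..<r} \<Longrightarrow> jj l < ii (Suc l)"
    and endo: "is_endo n I J r ii jj b \<phi>"
begin

definition psum :: "nat \<Rightarrow> complex fps" where
  "psum m = (\<Sum>g=1..m. b g)"

lemma psum_0 [simp]: "psum 0 = 0" and psum_Suc: "psum (Suc m) = psum m + b (Suc m)"
  by (simp_all add: psum_def)

lemma jj_less_ii: "l \<in> {1..r} \<Longrightarrow> m \<in> {1..r} \<Longrightarrow> l < m \<Longrightarrow> jj l < ii m"
proof (induction m)
  case (Suc m)
  show ?case
  proof (cases "l = m")
    case True
    then show ?thesis using jj_less_ii_Suc Suc.prems by simp
  next
    case False
    then have "jj l < ii m" using Suc by simp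
    also have "\<dots> < jj m" using ii_less_jj Suc.prems False by simp
    also have "\<dots> < ii (Suc m)" using jj_less_ii_Suc Suc.prems False by simp
    finally show ?thesis .
  qed
qed simp

lemma strict_mono_on_ii: "strict_mono_on {1..r} ii"
  by (rule strict_mono_onI) (meson ii_less_jj jj_less_ii order.strict_trans)

lemma strict_mono_on_jj: "strict_mono_on {1..r} jj"
  by (rule strict_mono_onI) (meson ii_less_jj jj_less_ii order.strict_trans)

lemma ii_marked: "l \<in> {1..r} \<Longrightarrow> ii l \<in> I - J"
  and jj_marked: "l \<in> {1..r} \<Longrightarrow> jj l \<in> J - I"
  using IJ_diff by auto

lemma ii_vertex: "l \<in> {1..r} \<Longrightarrow> ii l \<in> {1..n}"
  and jj_vertex: "l \<in> {1..r} \<Longrightarrow> jj l \<in> {1..n}"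
  using ii_marked jj_marked IJ by blast+

lemma marked_iff: "v \<in> (I - J) \<union> (J - I) \<longleftrightarrow> (\<exists>m\<in>{1..r}. ii m = v \<or> jj m = v)"
  unfolding IJ_diff by blast

lemma Mx_ii: "l \<in> {1..r} \<Longrightarrow> Mx I J r ii jj b (ii l) = mat2 fps_X (b (2*l - 1)) 0 1"
proof -
  assume l: "l \<in> {1..r}"
  have index: "(THE l'. l' \<in> {1..r} \<and> ii l = ii l') = l"
    using l strict_mono_on_eqD[OF strict_mono_on_ii, of l] by (intro the_equality) auto
  have "\<exists>l'\<in>{1..r}. ii l = ii l'" using l by blast
  then show ?thesis unfolding Mx_def by (simp only: if_True Let_def index)
qed

lemma Mx_jj: "l \<in> {1..r} \<Longrightarrow> Mx I J r ii jj b (jj l) = mat2 1 (b (2*l)) 0 fps_X"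
proof -
  assume l: "l \<in> {1..r}"
  have index: "(THE l'. l' \<in> {1..r} \<and> jj l = jj l') = l"
    using l strict_mono_on_eqD[OF strict_mono_on_jj, of l] by (intro the_equality) auto
  have "\<not> (\<exists>l'\<in>{1..r}. jj l = ii l')"
    using jj_marked[OF l] ii_marked by force
  moreover have "\<exists>l'\<in>{1..r}. jj l = jj l'" using l by blast
  ultimately show ?thesis unfolding Mx_def by (simp only: if_True if_False Let_def index)
qed

lemma Mx_unmarked:
  assumes "v \<notin> (I - J) \<union> (J - I)"
  shows "Mx I J r ii jj b v = (if v \<in> I \<inter> J then mat2 1 0 0 1 else mat2 fps_X 0 0 fps_X)"
proof -
  have "\<not> (\<exists>l\<in>{1..r}. v = ii l)" "\<not> (\<exists>l\<in>{1..r}. v = jj l)"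
    using assms ii_marked jj_marked by blast+
  then show ?thesis by (simp add: Mx_def)
qed

lemma intertwine_at: "v \<in> {1..n} \<Longrightarrow> Mx I J r ii jj b v ** \<phi> (prev n v) = \<phi> v ** Mx I J r ii jj b v"
  using endo unfolding is_endo_def by blast

lemma phi_unmarked:
  assumes "v \<in> {1..n}" and "v \<notin> (I - J) \<union> (J - I)"
  shows "\<phi> v = \<phi> (prev n v)"
proof -
  note eq = intertwine_at[OF assms(1)] and Mx = Mx_unmarked[OF assms(2)]
  show ?thesis
  proof (cases "v \<in> I \<inter> J")
    case True
    then have "Mx I J r ii jj b v = mat2 1 0 0 1" using Mx by simp
    from eq[unfolded this] show ?thesis by (rule intertwine_scalar[rotated]) simp
  next
    case False
    then have "Mx I J r ii jj b v = mat2 fps_X 0 0 fps_X" using Mx by auto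
    from eq[unfolded this] show ?thesis by (rule intertwine_scalar[rotated]) simp
  qed
qed

lemma phi_const_on_gap:
  assumes "1 \<le> p" "p \<le> q" "q \<le> n"
    and gap: "\<And>m. m \<in> {1..r} \<Longrightarrow> ii m \<notin> {p<..q} \<and> jj m \<notin> {p<..q}"
  shows "\<phi> q = \<phi> p"
proof (rule steps_eq_imp_eq[OF \<open>p \<le> q\<close>])
  fix w assume w: "p < w" "w \<le> q"
  have "w \<notin> (I - J) \<union> (J - I)"
    unfolding marked_iff using gap w by fastforce
  then have "\<phi> w = \<phi> (prev n w)" using phi_unmarked assms w by simp
  then show "\<phi> w = \<phi> (w - 1)" using assms w by (simp add: prev_def)
qed

lemma phi_prev_jj: "l \<in> {1..r} \<Longrightarrow> \<phi> (prev n (jj l)) = \<phi> (ii l)"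
proof -
  assume l: "l \<in> {1..r}"
  have "\<phi> (jj l - 1) = \<phi> (ii l)"
  proof (rule phi_const_on_gap)
    fix m assume m: "m \<in> {1..r}"
    show "ii m \<notin> {ii l<..jj l - 1} \<and> jj m \<notin> {ii l<..jj l - 1}"
      using jj_less_ii[OF m l] ii_less_jj[OF m] jj_less_ii[OF l m]
      by (cases m l rule: linorder_cases) auto
  qed (use ii_vertex[OF l] jj_vertex[OF l] ii_less_jj[OF l] in auto)
  then show ?thesis using ii_vertex[OF l] ii_less_jj[OF l] by (simp add: prev_def)
qed

lemma phi_prev_ii_Suc: "l \<in> {1..<r} \<Longrightarrow> \<phi> (prev n (ii (Suc l))) = \<phi> (jj l)"
proof -
  assume l: "l \<in> {1..<r}"
  then have l1: "l \<in> {1..r}" "Suc l \<in> {1..r}" by auto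
  have "\<phi> (ii (Suc l) - 1) = \<phi> (jj l)"
  proof (rule phi_const_on_gap)
    fix m assume m: "m \<in> {1..r}"
    have "m \<le> l \<or> Suc l \<le> m" by auto
    then show "ii m \<notin> {jj l<..ii (Suc l) - 1} \<and> jj m \<notin> {jj l<..ii (Suc l) - 1}"
      using ii_less_jj[OF m] strict_mono_on_leD[OF strict_mono_on_jj m l1(1)]
        strict_mono_on_leD[OF strict_mono_on_ii l1(2) m]
      by auto
  qed (use jj_vertex[OF l1(1)] ii_vertex[OF l1(2)] jj_less_ii_Suc[OF l] in auto)
  then show ?thesis using jj_vertex[OF l1(1)] jj_less_ii_Suc[OF l] by (simp add: prev_def)
qed

lemma phi_prev_ii_1: "\<phi> (prev n (ii 1)) = \<phi> (jj r)"
proof -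
  have ends: "1 \<in> {1..r}" "r \<in> {1..r}" using r_pos by auto
  have outside: "ii m \<notin> {p<..q} \<and> jj m \<notin> {p<..q}"
    if "m \<in> {1..r}" "q < ii 1 \<or> jj r \<le> p" for m p q
    using that ii_less_jj[OF that(1)] strict_mono_on_leD[OF strict_mono_on_ii ends(1) that(1)]
      strict_mono_on_leD[OF strict_mono_on_jj that(1) ends(2)]
    by auto
  have n_jj: "\<phi> n = \<phi> (jj r)"
  proof (rule phi_const_on_gap)
    show "1 \<le> jj r" "jj r \<le> n" using jj_vertex[OF ends(2)] by auto
  qed (use outside in auto)
  show ?thesis
  proof (cases "ii 1 = 1")
    case True
    then show ?thesis using n_jj by (simp add: prev_def)
  next
    case False
    then have ii_1: "2 \<le> ii 1" "ii 1 \<le> n" using ii_vertex[OF ends(1)] by auto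
    have "\<phi> (ii 1 - 1) = \<phi> 1"
      by (rule phi_const_on_gap) (use ii_1 outside in auto)
    moreover have "1 \<notin> (I - J) \<union> (J - I)"
      unfolding marked_iff using outside[where p = 0 and q = 1] ii_1 by fastforce
    then have "\<phi> 1 = \<phi> n" using phi_unmarked[of 1] ii_1 by (simp add: prev_def)
    ultimately show ?thesis using n_jj ii_1 by (simp add: prev_def)
  qed
qed

lemma lower_left_phi_jj_r: "\<phi> (jj r) $ 2 $ 1 = \<phi> (ii 1) $ 2 $ 1 * fps_X"
proof -
  have one: "1 \<in> {1..r}" using r_pos by simp
  have "mat2 fps_X (b 1) 0 1 ** \<phi> (jj r) = \<phi> (ii 1) ** mat2 fps_X (b 1) 0 1"
    using intertwine_at[OF ii_vertex[OF one]] unfolding Mx_ii[OF one] phi_prev_ii_1 by simp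
  then show ?thesis by (rule intertwine_upper_X1_lower_left)
qed

lemma phi_ii_step:
  assumes l: "l \<in> {1..r}" and dvd: "fps_X dvd (d - a) * s - s\<^sup>2 * c"
    and prev: "\<phi> (prev n (ii l)) =
      mat2 (a + s*c) (bb + tinv ((d - a) * s - s\<^sup>2 * c)) (fps_X * c) (d - s*c)"
  shows "\<phi> (ii l) = mat2 (a + (s + b (2*l - 1))*c)
    (fps_X*bb + (d - a)*(s + b (2*l - 1)) - (s + b (2*l - 1))\<^sup>2*c) c (d - (s + b (2*l - 1))*c)"
proof -
  from dvd obtain e where e: "(d - a) * s - s\<^sup>2 * c = fps_X * e" by (rule dvdE)
  have "mat2 fps_X (b (2*l - 1)) 0 1 ** mat2 (a + s*c) (bb + e) (fps_X * c) (d - s*c)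
        = \<phi> (ii l) ** mat2 fps_X (b (2*l - 1)) 0 1"
    using intertwine_at[OF ii_vertex[OF l]] unfolding Mx_ii[OF l] prev e tinv_fps_X_mult .
  from intertwine_upper_X1[OF fps_X_neq_zero e[symmetric] this] show ?thesis .
qed

lemma phi_jj_step:
  assumes l: "l \<in> {1..r}"
    and this_ii: "\<phi> (ii l) = mat2 (a + s*c) (fps_X*bb + (d - a) * s - s\<^sup>2*c) c (d - s*c)"
  shows "fps_X dvd (d - a)*(s + b (2*l)) - (s + b (2*l))\<^sup>2*c \<and>
    \<phi> (jj l) = mat2 (a + (s + b (2*l))*c) (bb + tinv ((d - a)*(s + b (2*l)) - (s + b (2*l))\<^sup>2*c))
      (fps_X * c) (d - (s + b (2*l))*c)"
proof -
  have "mat2 1 (b (2*l)) 0 fps_X ** mat2 (a + s*c) (fps_X*bb + (d - a) * s - s\<^sup>2*c) c (d - s*c)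
        = \<phi> (jj l) ** mat2 1 (b (2*l)) 0 fps_X"
    using intertwine_at[OF jj_vertex[OF l]] unfolding Mx_jj[OF l] phi_prev_jj[OF l] this_ii .
  from intertwine_upper_1X[OF fps_X_neq_zero this] obtain e
    where e: "fps_X * e = (d - a)*(s + b (2*l)) - (s + b (2*l))\<^sup>2*c"
      and jj: "\<phi> (jj l) = mat2 (a + (s + b (2*l))*c) (bb + e) (fps_X * c) (d - (s + b (2*l))*c)"
    by blast
  show ?thesis using dvdI[OF e[symmetric]] jj unfolding e[symmetric] tinv_fps_X_mult by simp
qed

lemma phi_ii_jj_formulas:
  assumes top: "\<phi> (jj r) = mat2 a bb (fps_X * c) d" and l: "l \<in> {1..r}"
  shows "\<phi> (ii l) = mat2 (a + psum (2*l - 1) * c)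
           (fps_X*bb + (d - a) * psum (2*l - 1) - (psum (2*l - 1))\<^sup>2 * c) c (d - psum (2*l - 1) * c)
    \<and> fps_X dvd (d - a) * psum (2*l) - (psum (2*l))\<^sup>2 * c
    \<and> \<phi> (jj l) = mat2 (a + psum (2*l) * c)
           (bb + tinv ((d - a) * psum (2*l) - (psum (2*l))\<^sup>2 * c)) (fps_X * c) (d - psum (2*l) * c)"
  using l
proof (induction l)
  case (Suc l)
  then have l: "Suc l \<in> {1..r}" by simp
  have entry: "fps_X dvd (d - a) * psum (2*l) - (psum (2*l))\<^sup>2 * c \<and>
    \<phi> (prev n (ii (Suc l))) = mat2 (a + psum (2*l) * c)
      (bb + tinv ((d - a) * psum (2*l) - (psum (2*l))\<^sup>2 * c)) (fps_X * c) (d - psum (2*l) * c)"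
  proof (cases "l = 0")
    case True
    then show ?thesis using top phi_prev_ii_1 tinv_fps_X_mult[of 0] by simp
  next
    case False
    then have "l \<in> {1..<r}" using l by simp
    then show ?thesis using Suc.IH phi_prev_ii_Suc[of l] by simp
  qed
  have odd_sum: "psum (2 * Suc l - 1) = psum (2*l) + b (2 * Suc l - 1)"
    by (simp add: psum_Suc)
  have odd: "\<phi> (ii (Suc l)) = mat2 (a + psum (2 * Suc l - 1) * c)
      (fps_X*bb + (d - a) * psum (2 * Suc l - 1) - (psum (2 * Suc l - 1))\<^sup>2 * c) c
      (d - psum (2 * Suc l - 1) * c)"
    unfolding odd_sum using entry by (intro phi_ii_step[OF l]) auto
  have even_sum: "psum (2 * Suc l) = psum (2 * Suc l - 1) + b (2 * Suc l)"
    by (simp add: psum_Suc)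
  show ?case using odd phi_jj_step[OF l odd] unfolding even_sum by blast
qed simp

end

theorem proposition3p2:
  fixes n k r :: nat and I J :: "nat set" and ii jj :: "nat \<Rightarrow> nat"
    and b :: "nat \<Rightarrow> complex fps" and \<phi> :: "nat \<Rightarrow> mat2"
  assumes n6: "n \<ge> 6" and k: "1 \<le> k" "k \<le> n - 1"
    and IJ: "I \<subseteq> {1..n}" "J \<subseteq> {1..n}" "card I = k" "card J = k"
    and tight: "tightly_interlacing k r I J"
    and r1: "r \<ge> 1"
    and IJdiff: "I - J = ii ` {1..r}" "J - I = jj ` {1..r}"
    and ord: "1 \<le> ii 1" "\<forall>l\<in>{1..r}. ii l < jj l" "\<forall>l\<in>{1..<r}. jj l < ii (l + 1)"
      "jj r \<le> n"
    and bsum: "(\<Sum>l=1..2*r. b l) = 0"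
    and endo: "is_endo n I J r ii jj b \<phi>"
  shows "\<exists>a bb c d :: complex fps.
     (let S = (\<lambda>m. \<Sum>g=1..m. b g) in
       fps_X dvd c \<and>
       (\<forall>m\<in>{1..r-1}. fps_X dvd ((d - a) * S (2*m) - (S (2*m))\<^sup>2 * tinv c)) \<and>
       \<phi> (jj r) = mat2 a bb c d \<and>
       (\<forall>l\<in>{1..r}.
          \<phi> (ii l) = mat2 (a + S (2*l-1) * tinv c)
                          (fps_X * bb + (d - a) * S (2*l-1) - (S (2*l-1))\<^sup>2 * tinv c)
                          (tinv c)
                          (d - S (2*l-1) * tinv c) \<and>
          \<phi> (jj l) = mat2 (a + S (2*l) * tinv c)
                          (bb + tinv ((d - a) * S (2*l) - (S (2*l))\<^sup>2 * tinv c))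
                          c
                          (d - S (2*l) * tinv c)) \<and>
       (\<forall>v\<in>{1..n}. v \<in> (I \<inter> J) \<union> ({1..n} - I - J) \<longrightarrow> \<phi> v = \<phi> (prev n v)))"
proof -
  interpret module_endo n r I J ii jj b \<phi>
    using IJ(1,2) r1 IJdiff ord(2,3) endo by unfold_locales auto
  obtain a bb c d where top: "\<phi> (jj r) = mat2 a bb c d" by (rule mat2_cases)
  define c0 where "c0 = tinv c"
  have "c = fps_X * \<phi> (ii 1) $ 2 $ 1" using lower_left_phi_jj_r top by (simp add: mult.commute)
  then have c: "c = fps_X * c0" by (simp add: c0_def)
  note formulas = phi_ii_jj_formulas[OF top[unfolded c], folded c, unfolded c0_def]
  have "fps_X dvd c" using c by simp
  moreover have "\<forall>m\<in>{1..r-1}. fps_X dvd (d - a) * psum (2*m) - (psum (2*m))\<^sup>2 * tinv c"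
  proof
    fix m assume "m \<in> {1..r-1}"
    then have "m \<in> {1..r}" by auto
    then show "fps_X dvd (d - a) * psum (2*m) - (psum (2*m))\<^sup>2 * tinv c" using formulas by blast
  qed
  moreover have "\<forall>v\<in>{1..n}. v \<in> (I \<inter> J) \<union> ({1..n} - I - J) \<longrightarrow> \<phi> v = \<phi> (prev n v)"
    using phi_unmarked by blast
  ultimately show ?thesis
    using top formulas unfolding Let_def psum_def[symmetric] by blast
qed

end
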